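(* Let $n\ge2$, let $\mathfrak{g}_n$ be the Lie algebra defined in the context, $Z(\mathfrak{g}_n)=\operatorname{span}\{z_{i,j}\}$ its centre and $\overline{\mathfrak{g}}_n=\mathfrak{g}_n/Z(\mathfrak{g}_n)$. The map $\overline{\rho}:\overline{\mathfrak{g}}_n\to\mathfrak{sl}_n(\mathbb{K})$ sending the class of $x=ah+bx_++cx_-+\sum_{i=1}^{n-2}(d_iy_{i,+}+e_iy_{i,-})$ to the $n\times n$ matrix whose first $n-2$ rows are zero, whose $(n-1)$-th row is $(d_1,\dots,d_{n-2},a,b)$ and whose $n$-th row is $(e_1,\dots,e_{n-2},c,-a)$, is a representation of $\overline{\mathfrak{g}}_n$.
   Context: $\mathbb{K}$ is $\mathbb{R}$ or $\mathbb{C}$. For $n\ge2$, $\mathfrak{g}_n$ is the Lie algebra with basis $h,x_-,x_+$, $y_{i,\pm}$ ($1\le i\le n-2$), $z_{i,j}$ ($1\le i\le j\le n-2$), whose nonzero brackets (up to antisymmetry) are $[x_+,x_-]=h$, $[h,x_\pm]=\pm2x_\pm$, $[h,y_{i,\pm}]=\pm y_{i,\pm}$, $[x_-,y_{i,+}]=y_{i,-}$, $[x_+,y_{i,-}]=y_{i,+}$, $[y_{i,+},y_{j,-}]=z_{\min(i,j),\max(i,j)}$; all other brackets of basis elements vanish. *)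

theory Defs
  imports Complex_Main
begin

text \<open>Basis of g_n: h, x_-, x_+, y_{i,+}, y_{i,-} (1 <= i <= n-2), z_{i,j} (1 <= i <= j <= n-2).\<close>
datatype gidx = H | Xm | Xp | Yp nat | Ym nat | Zb nat nat

definition gbasis :: "nat \<Rightarrow> gidx set" where
  "gbasis n = {H, Xm, Xp} \<union> {Yp i | i. 1 \<le> i \<and> i \<le> n - 2} \<union> {Ym i | i. 1 \<le> i \<and> i \<le> n - 2}
     \<union> {Zb i j | i j. 1 \<le> i \<and> i \<le> j \<and> j \<le> n - 2}"

text \<open>Elements of g_n over the field 'a: coordinate vectors w.r.t. the basis.\<close>
definition gvec :: "nat \<Rightarrow> (gidx \<Rightarrow> 'a::field) set" where
  "gvec n = {v. \<forall>b. b \<notin> gbasis n \<longrightarrow> v b = 0}"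

definition ev :: "gidx \<Rightarrow> gidx \<Rightarrow> 'a::field" where
  "ev b = (\<lambda>c. if c = b then 1 else 0)"

fun bb :: "gidx \<Rightarrow> gidx \<Rightarrow> gidx \<Rightarrow> 'a::field" where
  "bb Xp Xm = ev H"
| "bb Xm Xp = (\<lambda>c. - ev H c)"
| "bb H Xp = (\<lambda>c. 2 * ev Xp c)"
| "bb Xp H = (\<lambda>c. - (2 * ev Xp c))"
| "bb H Xm = (\<lambda>c. - (2 * ev Xm c))"
| "bb Xm H = (\<lambda>c. 2 * ev Xm c)"
| "bb H (Yp i) = ev (Yp i)"
| "bb (Yp i) H = (\<lambda>c. - ev (Yp i) c)"
| "bb H (Ym i) = (\<lambda>c. - ev (Ym i) c)"
| "bb (Ym i) H = ev (Ym i)"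
| "bb Xm (Yp i) = ev (Ym i)"
| "bb (Yp i) Xm = (\<lambda>c. - ev (Ym i) c)"
| "bb Xp (Ym i) = ev (Yp i)"
| "bb (Ym i) Xp = (\<lambda>c. - ev (Yp i) c)"
| "bb (Yp i) (Ym j) = ev (Zb (min i j) (max i j))"
| "bb (Ym j) (Yp i) = (\<lambda>c. - ev (Zb (min i j) (max i j)) c)"
| "bb _ _ = (\<lambda>c. 0)"

definition gbr :: "nat \<Rightarrow> (gidx \<Rightarrow> 'a::field) \<Rightarrow> (gidx \<Rightarrow> 'a) \<Rightarrow> (gidx \<Rightarrow> 'a)" where
  "gbr n u v = (\<lambda>c. \<Sum>a\<in>gbasis n. \<Sum>b\<in>gbasis n. u a * v b * bb a b c)"

text \<open>x and y have the same class modulo the centre Z(g_n) = span{z_{i,j}}.\<close>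
definition same_class :: "(gidx \<Rightarrow> 'a::field) \<Rightarrow> (gidx \<Rightarrow> 'a) \<Rightarrow> bool" where
  "same_class x y \<longleftrightarrow> (\<forall>b. (\<forall>i j. b \<noteq> Zb i j) \<longrightarrow> x b = y b)"

text \<open>n x n matrices, indices 1..n, entries outside zero.\<close>
type_synonym 'a mat = "nat \<Rightarrow> nat \<Rightarrow> 'a"

definition mmul :: "nat \<Rightarrow> 'a::field mat \<Rightarrow> 'a mat \<Rightarrow> 'a mat" where
  "mmul n A B = (\<lambda>i j. \<Sum>k=1..n. A i k * B k j)"

definition mcomm :: "nat \<Rightarrow> 'a::field mat \<Rightarrow> 'a mat \<Rightarrow> 'a mat" where
  "mcomm n A B = (\<lambda>i j. mmul n A B i j - mmul n B A i j)"

definition in_sl :: "nat \<Rightarrow> 'a::field mat \<Rightarrow> bool" where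
  "in_sl n A \<longleftrightarrow> (\<forall>i j. \<not> (1 \<le> i \<and> i \<le> n \<and> 1 \<le> j \<and> j \<le> n) \<longrightarrow> A i j = 0)
                  \<and> (\<Sum>i=1..n. A i i) = 0"

definition rho :: "nat \<Rightarrow> (gidx \<Rightarrow> 'a::field) \<Rightarrow> 'a mat" where
  "rho n x = (\<lambda>r s.
     if r = n - 1 then
       (if 1 \<le> s \<and> s \<le> n - 2 then x (Yp s) else if s = n - 1 then x H else if s = n then x Xp else 0)
     else if r = n then
       (if 1 \<le> s \<and> s \<le> n - 2 then x (Ym s) else if s = n - 1 then x Xm else if s = n then - x H else 0)
     else 0)"

text \<open>rho-bar : g_n / Z(g_n) \<rightarrow> sl_n is a well-defined representation:
  it is well defined on classes, linear, lands in sl_n, and preserves brackets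
  (the bracket of g_n/Z being induced by that of g_n).\<close>
definition rhobar_is_representation :: "'a::field itself \<Rightarrow> nat \<Rightarrow> bool" where
  "rhobar_is_representation _ n \<longleftrightarrow>
     (\<forall>x\<in>gvec n. \<forall>y\<in>gvec n. same_class x y \<longrightarrow> rho n x = (rho n y :: 'a mat))
   \<and> (\<forall>x\<in>gvec n. \<forall>y\<in>gvec n. \<forall>c::'a.
        rho n (\<lambda>b. c * x b + y b) = (\<lambda>i j. c * rho n x i j + rho n y i j))
   \<and> (\<forall>x\<in>(gvec n :: (gidx \<Rightarrow> 'a) set). in_sl n (rho n x))
   \<and> (\<forall>x\<in>(gvec n :: (gidx \<Rightarrow> 'a) set). \<forall>y\<in>gvec n.
        rho n (gbr n x y) = mcomm n (rho n x) (rho n y))"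

end

theory Submission
  imports Defs
begin

text \<open>The matrix \<open>\<rho>(x)\<close> has the block shape \<open>[[0, 0], [D, A]]\<close>, where \<open>A \<in> sl\<^sub>2\<close> is the
  image of the \<open>sl\<^sub>2\<close>-part \<open>a h + b x\<^sub>+ + c x\<^sub>-\<close> and the columns of the \<open>2 \<times> (n-2)\<close> block \<open>D\<close>
  are the pairs \<open>(d\<^sub>i, e\<^sub>i)\<close>. Since the first \<open>n-2\<close> rows vanish, only the last two rows and
  columns contribute to products, and \<open>[\<rho>(x), \<rho>(y)] = [[0, 0], [A D' - A' D, [A, A']]]\<close>. This is
  the bracket of \<open>g\<^sub>n\<close> on the non-central coordinates: each pair \<open>y\<^sub>i\<^sub>+, y\<^sub>i\<^sub>-\<close> spans a copy of
  the standard \<open>sl\<^sub>2\<close>-module, and the bracket of two \<open>y\<close>'s is central, which \<open>\<rho>\<close> ignores.\<close>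

lemma finite_gbasis: "finite (gbasis n)"
proof -
  have "{Yp i | i. 1 \<le> i \<and> i \<le> n - 2} = Yp ` {1..n-2}"
       "{Ym i | i. 1 \<le> i \<and> i \<le> n - 2} = Ym ` {1..n-2}"
    by auto
  moreover have "{Zb i j | i j. 1 \<le> i \<and> i \<le> j \<and> j \<le> n - 2}
      \<subseteq> case_prod Zb ` ({1..n-2} \<times> {1..n-2})"
    by auto
  then have "finite {Zb i j | i j. 1 \<le> i \<and> i \<le> j \<and> j \<le> n - 2}"
    by (rule finite_subset) simp
  ultimately show ?thesis
    unfolding gbasis_def by simp
qed

lemma gbasis_memI:
  "H \<in> gbasis n" "Xp \<in> gbasis n" "Xm \<in> gbasis n"
  "1 \<le> s \<Longrightarrow> s \<le> n - 2 \<Longrightarrow> Yp s \<in> gbasis n"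
  "1 \<le> s \<Longrightarrow> s \<le> n - 2 \<Longrightarrow> Ym s \<in> gbasis n"
  by (auto simp: gbasis_def)

lemma sum_sum_eq_sum_pairs:
  fixes g :: "'b \<Rightarrow> 'b \<Rightarrow> 'a::comm_monoid_add"
  assumes "finite S" "P \<subseteq> S \<times> S" "\<And>a b. (a, b) \<notin> P \<Longrightarrow> g a b = 0"
  shows "(\<Sum>a\<in>S. \<Sum>b\<in>S. g a b) = (\<Sum>(a, b)\<in>P. g a b)"
proof -
  have "(\<Sum>a\<in>S. \<Sum>b\<in>S. g a b) = (\<Sum>(a, b)\<in>S \<times> S. g a b)"
    by (simp add: sum.cartesian_product)
  also have "\<dots> = (\<Sum>(a, b)\<in>P. g a b)"
    using assms by (intro sum.mono_neutral_right) auto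
  finally show ?thesis .
qed

lemma gbr_eq_sum_pairs:
  fixes u v :: "gidx \<Rightarrow> 'a::field"
  assumes "P \<subseteq> gbasis n \<times> gbasis n" "\<And>a b. (a, b) \<notin> P \<Longrightarrow> (bb a b c :: 'a) = 0"
  shows "gbr n u v c = (\<Sum>(a, b)\<in>P. u a * v b * bb a b c)"
  unfolding gbr_def
proof (rule sum_sum_eq_sum_pairs)
  fix a b assume "(a, b) \<notin> P"
  then show "u a * v b * bb a b c = 0" by (simp add: assms(2))
qed (simp_all add: finite_gbasis assms(1))

lemma gbr_H: "gbr n u v H = (u Xp * v Xm - u Xm * v Xp :: 'a::field)"
proof -
  have "gbr n u v H = (\<Sum>(a, b)\<in>{(Xp, Xm), (Xm, Xp)}. u a * v b * bb a b H)"
  proof (rule gbr_eq_sum_pairs)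
    fix a b :: gidx assume "(a, b) \<notin> {(Xp, Xm), (Xm, Xp)}"
    then show "(bb a b H :: 'a) = 0" by (cases a; cases b; auto simp: ev_def)
  qed (auto simp: gbasis_memI)
  then show ?thesis by (simp add: ev_def)
qed

lemma gbr_Xp: "gbr n u v Xp = (2 * u H * v Xp - 2 * u Xp * v H :: 'a::field)"
proof -
  have "gbr n u v Xp = (\<Sum>(a, b)\<in>{(H, Xp), (Xp, H)}. u a * v b * bb a b Xp)"
  proof (rule gbr_eq_sum_pairs)
    fix a b :: gidx assume "(a, b) \<notin> {(H, Xp), (Xp, H)}"
    then show "(bb a b Xp :: 'a) = 0" by (cases a; cases b; auto simp: ev_def)
  qed (auto simp: gbasis_memI)
  then show ?thesis by (simp add: ev_def algebra_simps)
qed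

lemma gbr_Xm: "gbr n u v Xm = (2 * u Xm * v H - 2 * u H * v Xm :: 'a::field)"
proof -
  have "gbr n u v Xm = (\<Sum>(a, b)\<in>{(H, Xm), (Xm, H)}. u a * v b * bb a b Xm)"
  proof (rule gbr_eq_sum_pairs)
    fix a b :: gidx assume "(a, b) \<notin> {(H, Xm), (Xm, H)}"
    then show "(bb a b Xm :: 'a) = 0" by (cases a; cases b; auto simp: ev_def)
  qed (auto simp: gbasis_memI)
  then show ?thesis by (simp add: ev_def algebra_simps)
qed

lemma gbr_Yp:
  assumes "1 \<le> s" "s \<le> n - 2"
  shows "gbr n u v (Yp s) =
    (u H * v (Yp s) - u (Yp s) * v H + u Xp * v (Ym s) - u (Ym s) * v Xp :: 'a::field)"
proof -
  let ?P = "{(H, Yp s), (Yp s, H), (Xp, Ym s), (Ym s, Xp)}"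
  have "gbr n u v (Yp s) = (\<Sum>(a, b)\<in>?P. u a * v b * bb a b (Yp s))"
  proof (rule gbr_eq_sum_pairs)
    fix a b :: gidx assume "(a, b) \<notin> ?P"
    then show "(bb a b (Yp s) :: 'a) = 0" by (cases a; cases b; auto simp: ev_def)
  qed (use assms in \<open>auto simp: gbasis_memI\<close>)
  then show ?thesis by (simp add: ev_def algebra_simps)
qed

lemma gbr_Ym:
  assumes "1 \<le> s" "s \<le> n - 2"
  shows "gbr n u v (Ym s) =
    (u Xm * v (Yp s) - u (Yp s) * v Xm - u H * v (Ym s) + u (Ym s) * v H :: 'a::field)"
proof -
  let ?P = "{(Xm, Yp s), (Yp s, Xm), (H, Ym s), (Ym s, H)}"
  have "gbr n u v (Ym s) = (\<Sum>(a, b)\<in>?P. u a * v b * bb a b (Ym s))"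
  proof (rule gbr_eq_sum_pairs)
    fix a b :: gidx assume "(a, b) \<notin> ?P"
    then show "(bb a b (Ym s) :: 'a) = 0" by (cases a; cases b; auto simp: ev_def)
  qed (use assms in \<open>auto simp: gbasis_memI\<close>)
  then show ?thesis by (simp add: ev_def algebra_simps)
qed

(* Stated with n - Suc 0, the simp normal form of n - 1, so that simp can use it on rho_def. *)
lemma last_two_indices_distinct:
  assumes "(n::nat) \<ge> 2"
  shows "n - Suc 0 \<noteq> n" "n \<noteq> n - Suc 0" "\<not> n - Suc 0 \<le> n - 2" "\<not> n \<le> n - 2"
  using assms by auto

lemma sum_last_two:
  fixes f :: "nat \<Rightarrow> 'a::comm_monoid_add"
  assumes "n \<ge> 2" "\<And>k. k \<noteq> n - 1 \<Longrightarrow> k \<noteq> n \<Longrightarrow> f k = 0"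
  shows "(\<Sum>k=1..n. f k) = f (n - 1) + f n"
proof -
  have "(\<Sum>k=1..n. f k) = (\<Sum>k\<in>{n - 1, n}. f k)"
    using assms by (intro sum.mono_neutral_right) auto
  also have "\<dots> = f (n - 1) + f n"
    using assms(1) by simp
  finally show ?thesis .
qed

lemma rho_same_class:
  assumes "same_class x y"
  shows "rho n x = rho n y"
proof -
  have "x H = y H" "x Xp = y Xp" "x Xm = y Xm" "\<And>s. x (Yp s) = y (Yp s)" "\<And>s. x (Ym s) = y (Ym s)"
    using assms by (simp_all add: same_class_def)
  then show ?thesis
    unfolding rho_def by (simp only:)
qed

lemma rho_linear:
  assumes "n \<ge> 2"
  shows "rho n (\<lambda>b. c * x b + y b) = (\<lambda>i j. c * rho n x i j + rho n y i j)"
  unfolding rho_def using last_two_indices_distinct[OF assms]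
  by (intro ext) simp

lemma rho_in_sl:
  assumes "n \<ge> 2"
  shows "in_sl n (rho n x)"
  unfolding in_sl_def
proof
  show "\<forall>i j. \<not> (1 \<le> i \<and> i \<le> n \<and> 1 \<le> j \<and> j \<le> n) \<longrightarrow> rho n x i j = 0"
    using assms by (auto simp: rho_def)
  have "(\<Sum>i=1..n. rho n x i i) = rho n x (n - 1) (n - 1) + rho n x n n"
    using assms by (intro sum_last_two) (auto simp: rho_def)
  also have "\<dots> = 0"
    using last_two_indices_distinct[OF assms] by (simp add: rho_def)
  finally show "(\<Sum>i=1..n. rho n x i i) = 0" .
qed

lemma mmul_rho:
  assumes "n \<ge> 2"
  shows "mmul n (rho n x) (rho n y) i j =
    rho n x i (n - 1) * rho n y (n - 1) j + rho n x i n * (rho n y n j :: 'a::field)"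
  unfolding mmul_def using assms by (intro sum_last_two) (auto simp: rho_def)

lemma rho_gbr:
  assumes "n \<ge> 2"
  shows "rho n (gbr n x y) = mcomm n (rho n x) (rho n y)"
proof (intro ext)
  fix i j
  show "rho n (gbr n x y) i j = mcomm n (rho n x) (rho n y) i j"
    unfolding mcomm_def mmul_rho[OF assms] unfolding rho_def
    by (cases "i = n - 1"; cases "i = n"; cases "1 \<le> j"; cases "j \<le> n - 2"; cases "j = n - 1"; cases "j = n")
      (use assms last_two_indices_distinct[OF assms] in
        \<open>simp_all add: gbr_H gbr_Xp gbr_Xm gbr_Yp gbr_Ym algebra_simps\<close>)
qed

lemma rhobar_is_representation:
  assumes "n \<ge> 2"
  shows "rhobar_is_representation TYPE('a::field) n"
  unfolding rhobar_is_representation_def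
  using rho_same_class rho_linear[OF assms] rho_in_sl[OF assms] rho_gbr[OF assms]
  by blast

theorem corollary3p6:
  fixes n :: nat
  assumes "n \<ge> 2"
  shows "rhobar_is_representation TYPE(real) n \<and> rhobar_is_representation TYPE(complex) n"
  using rhobar_is_representation[OF assms, where 'a = real]
    rhobar_is_representation[OF assms, where 'a = complex]
  by blast

end
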